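(* Let $n\ge 1$, let $C_u(v_1),\ldots,C_u(v_n)>0$ and $R_1,\ldots,R_n>0$ be sustainable, i.e. $R_i\le C_u(v_i)$ for all $i$, $\sum_{j\ne i}R_j\le C_d(v_i)$ for all $i$ (for some downlink capacities $C_d(v_i)>0$), and $(n-1)\sum_{i=1}^n R_i\le\sum_{i=1}^n C_u(v_i)$. Then the output $r_{i,j}$ of the algorithm described in the context satisfies the Uplink Capacity Constraint: for every $1\le k\le n$, $$\sum_{j=1}^n r_{k,j} + (n-2)\sum_{i=1}^n r_{i,k} \leq C_u(v_k),$$ i.e. the aggregate uplink rate used by $v_k$ under the two-level broadcast trees described in the context is at most $C_u(v_k)$.
   Context: Sub-stream rate assigning algorithm. Input: $n$, uplink capacities $C_u(v_1),\ldots,C_u(v_n)$ and rates $R_1,\ldots,R_n$. Initialize $r_{i,j}:=0$ for all $1\le i,j\le n$ and $U_i := C_u(v_i)-R_i$ for $1\le i\le n$. Outer loop: for $i=1$ to $n$: set $R'_i := R_i$; inner loop: for $j=1$ to $n$: if $(n-2)R'_i > U_j$ then set $r_{i,j} := U_j/(n-2)$, else set $r_{i,j} := R'_i$; then set $U_j := U_j-(n-2)r_{i,j}$ and $R'_i := R'_i - r_{i,j}$; if $R'_i = 0$, exit the inner loop. Output all $r_{i,j}$. Interpretation: $r_{i,j}$ is the rate of the sub-stream $s_{i,j}$ of site $v_i$'s data stream. Sub-stream $s_{i,i}$ is sent by $v_i$ directly to all $n-1$ other sites (using $(n-1)r_{i,i}$ of $v_i$'s uplink); for $j\neq i$, sub-stream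 $s_{i,j}$ is sent from $v_i$ to $v_j$ (using $r_{i,j}$ of $v_i$'s uplink), and $v_j$ forwards it to the remaining $n-2$ sites (using $(n-2)r_{i,j}$ of $v_j$'s uplink). Hence the total uplink rate used by $v_k$ is $\sum_{j} r_{k,j} + (n-2)\sum_i r_{i,k}$. *)

theory Defs
  imports Complex_Main
begin

text \<open>Sub-stream rate assigning algorithm. Sites are indexed 1..n.
  The state of the inner loop is (r, U, R', exited); the flag records
  that the inner loop has been exited because R' became 0.\<close>

definition inner_step ::
  "nat \<Rightarrow> nat \<Rightarrow> nat \<Rightarrow>
   (nat \<Rightarrow> nat \<Rightarrow> real) \<times> (nat \<Rightarrow> real) \<times> real \<times> bool \<Rightarrow>
   (nat \<Rightarrow> nat \<Rightarrow> real) \<times> (nat \<Rightarrow> real) \<times> real \<times> bool" where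
  "inner_step n i j st =
     (case st of (r, U, R', ex) \<Rightarrow>
       if ex then (r, U, R', ex)
       else (let rij = (if (real n - 2) * R' > U j then U j / (real n - 2) else R');
                 U' = U(j := U j - (real n - 2) * rij);
                 R'' = R' - rij;
                 r' = r(i := (r i)(j := rij))
             in (r', U', R'', R'' = 0)))"

definition outer_step ::
  "nat \<Rightarrow> (nat \<Rightarrow> real) \<Rightarrow> nat \<Rightarrow>
   (nat \<Rightarrow> nat \<Rightarrow> real) \<times> (nat \<Rightarrow> real) \<Rightarrow>
   (nat \<Rightarrow> nat \<Rightarrow> real) \<times> (nat \<Rightarrow> real)" where
  "outer_step n R i st =
     (case st of (r, U) \<Rightarrow>
       (case fold (inner_step n i) [1..<n+1] (r, U, R i, False) of
          (r', U', _, _) \<Rightarrow> (r', U')))"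

definition substream_rates ::
  "nat \<Rightarrow> (nat \<Rightarrow> real) \<Rightarrow> (nat \<Rightarrow> real) \<Rightarrow> nat \<Rightarrow> nat \<Rightarrow> real" where
  "substream_rates n Cu R =
     fst (fold (outer_step n R) [1..<n+1] (\<lambda>_ _. 0, \<lambda>j. Cu j - R j))"

end

theory Submission
  imports Defs
begin

(* Assigning the rate x to the sub-stream s(i,j) charges (n-2) x to the residual uplink U(j)
   of the relay v_j and x to the residual rate R'(i), and the rule caps x by both U(j)/(n-2)
   and R'(i). Every entry r(i,j) is written at most once, starting from 0, so throughout the
   algorithm U(k) >= 0, (n-2) * sum_i r(i,k) + U(k) = C_u(v_k) - R_k and sum_j r(k,j) <= R_k.
   Adding the last two facts bounds the uplink load of v_k by C_u(v_k) - U(k). Only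
   0 <= R_k <= C_u(v_k) is needed. *)

lemma sum_fun_upd_zero:
  fixes f :: "'a \<Rightarrow> 'b::comm_monoid_add"
  assumes "finite A" "a \<in> A" "f a = 0"
  shows "(\<Sum>x\<in>A. (f(a := b)) x) = sum f A + b"
proof -
  have "(\<Sum>x\<in>A. (f(a := b)) x) = b + (\<Sum>x\<in>A - {a}. f x)"
    using assms by (simp add: sum.remove)
  also have "\<dots> = sum f A + b"
    using assms by (simp add: sum.remove add.commute)
  finally show ?thesis .
qed

lemma assigned_rate_bounds:
  fixes m u c :: real
  assumes "0 \<le> u" "0 \<le> c"
  shows "0 \<le> (if m * c > u then u / m else c)"
    and "(if m * c > u then u / m else c) \<le> c"
    and "m * (if m * c > u then u / m else c) \<le> u"
proof -
  have "m > 0" if "m * c > u"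
    using that assms by (smt (verit) mult_nonpos_nonneg)
  then show "0 \<le> (if m * c > u then u / m else c)"
    and "(if m * c > u then u / m else c) \<le> c"
    and "m * (if m * c > u then u / m else c) \<le> u"
    using assms by (auto simp: field_simps)
qed

definition inner_loop_invariant ::
  "nat \<Rightarrow> nat \<Rightarrow> (nat \<Rightarrow> real) \<Rightarrow> real \<Rightarrow>
   (nat \<Rightarrow> nat \<Rightarrow> real) \<times> (nat \<Rightarrow> real) \<times> real \<times> bool \<Rightarrow> bool" where
  "inner_loop_invariant n i C Ri st = (case st of (r, U, R', _) \<Rightarrow>
     (\<forall>k\<in>{1..n}. 0 \<le> U k \<and> (real n - 2) * (\<Sum>i'=1..n. r i' k) + U k = C k)
     \<and> 0 \<le> R' \<and> (\<Sum>j=1..n. r i j) + R' = Ri)"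

lemma inner_step_frame:
  assumes "i' \<noteq> i \<or> j' \<noteq> j"
  shows "fst (inner_step n i j st) i' j' = fst st i' j'"
  using assms by (cases st) (auto simp: inner_step_def Let_def)

lemma inner_step_invariant:
  assumes "i \<in> {1..n}" "j \<in> {1..n}" "fst st i j = 0"
    and "inner_loop_invariant n i C Ri st"
  shows "inner_loop_invariant n i C Ri (inner_step n i j st)"
proof -
  obtain r U R' ex where st: "st = (r, U, R', ex)" by (cases st)
  show ?thesis
  proof (cases ex)
    case True
    then show ?thesis using assms by (simp add: st inner_step_def)
  next
    case False
    define x where "x = (if (real n - 2) * R' > U j then U j / (real n - 2) else R')"
    have "0 \<le> U j" "0 \<le> R'"
      using assms(2,4) by (auto simp: st inner_loop_invariant_def)
    then have x: "0 \<le> x" "x \<le> R'" "(real n - 2) * x \<le> U j"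
      unfolding x_def by (rule assigned_rate_bounds)+
    define r' where "r' = r(i := (r i)(j := x))"
    have step: "inner_step n i j st = (r', U(j := U j - (real n - 2) * x), R' - x, R' - x = 0)"
      using False by (simp add: st inner_step_def Let_def x_def r'_def)
    have r_ij: "r i j = 0" using assms(3) by (simp add: st)
    have col: "(\<Sum>i'=1..n. r' i' k) = (\<Sum>i'=1..n. r i' k) + (if k = j then x else 0)" for k
    proof (cases "k = j")
      case True
      have "(\<Sum>i'=1..n. r' i' k) = (\<Sum>i'=1..n. ((\<lambda>i'. r i' j)(i := x)) i')"
        using True by (intro sum.cong) (auto simp: r'_def)
      also have "\<dots> = (\<Sum>i'=1..n. r i' j) + x"
        using assms(1) r_ij by (intro sum_fun_upd_zero) auto
      finally show ?thesis
        using True by simp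
    qed (auto simp: r'_def intro: sum.cong)
    have row: "(\<Sum>j'=1..n. r' i j') = (\<Sum>j'=1..n. r i j') + x"
      unfolding r'_def fun_upd_same using assms(2) r_ij by (intro sum_fun_upd_zero) auto
    show ?thesis
      using assms(4) x col row unfolding step by (auto simp: st inner_loop_invariant_def algebra_simps)
  qed
qed

lemma fold_inner_step_frame:
  assumes "i' \<noteq> i \<or> j' \<notin> set js"
  shows "fst (fold (inner_step n i) js st) i' j' = fst st i' j'"
  using assms by (induction js arbitrary: st) (auto simp: inner_step_frame)

lemma fold_inner_step_invariant:
  assumes "distinct js" "set js \<subseteq> {1..n}" "i \<in> {1..n}"
    and "\<forall>j\<in>set js. fst st i j = 0" "inner_loop_invariant n i C Ri st"
  shows "inner_loop_invariant n i C Ri (fold (inner_step n i) js st)"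
  using assms
proof (induction js arbitrary: st)
  case (Cons j js)
  have "\<forall>j'\<in>set js. fst (inner_step n i j st) i j' = 0"
  proof
    fix j' assume "j' \<in> set js"
    then have "j' \<noteq> j" and "fst st i j' = 0"
      using Cons.prems(1,4) by auto
    then show "fst (inner_step n i j st) i j' = 0"
      by (simp add: inner_step_frame)
  qed
  moreover have "inner_loop_invariant n i C Ri (inner_step n i j st)"
    using Cons.prems by (intro inner_step_invariant) auto
  ultimately show ?case
    using Cons by simp
qed simp

definition outer_loop_invariant ::
  "nat \<Rightarrow> (nat \<Rightarrow> real) \<Rightarrow> (nat \<Rightarrow> real) \<Rightarrow>
   (nat \<Rightarrow> nat \<Rightarrow> real) \<times> (nat \<Rightarrow> real) \<Rightarrow> bool" where
  "outer_loop_invariant n Cu R st = (case st of (r, U) \<Rightarrow>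
     \<forall>k\<in>{1..n}. 0 \<le> U k \<and> (real n - 2) * (\<Sum>i=1..n. r i k) + U k = Cu k - R k
        \<and> (\<Sum>j=1..n. r k j) \<le> R k)"

lemma outer_step_eq_inner_fold:
  obtains R' ex where "fold (inner_step n i) [1..<n+1] (r, U, R i, False)
    = (fst (outer_step n R i (r, U)), snd (outer_step n R i (r, U)), R', ex)"
  by (cases "fold (inner_step n i) [1..<n+1] (r, U, R i, False)") (auto simp: outer_step_def)

lemma outer_step_frame:
  assumes "i' \<noteq> i"
  shows "fst (outer_step n R i (r, U)) i' = r i'"
proof
  fix j
  obtain R' ex where "fold (inner_step n i) [1..<n+1] (r, U, R i, False)
      = (fst (outer_step n R i (r, U)), snd (outer_step n R i (r, U)), R', ex)"
    by (rule outer_step_eq_inner_fold)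
  then show "fst (outer_step n R i (r, U)) i' j = r i' j"
    using fold_inner_step_frame[of i' i j "[1..<n+1]" n "(r, U, R i, False)"] assms by simp
qed

lemma outer_step_invariant:
  assumes "i \<in> {1..n}" "0 \<le> R i" "\<forall>j. fst st i j = 0"
    and "outer_loop_invariant n Cu R st"
  shows "outer_loop_invariant n Cu R (outer_step n R i st)"
proof -
  obtain r U where st: "st = (r, U)" by (cases st)
  obtain r' U' R' ex where step: "outer_step n R i (r, U) = (r', U')"
    and F: "fold (inner_step n i) [1..<n+1] (r, U, R i, False) = (r', U', R', ex)"
    using outer_step_eq_inner_fold[of n i r U R] by (metis prod.collapse)
  have "inner_loop_invariant n i (\<lambda>k. Cu k - R k) (R i) (r, U, R i, False)"
    using assms(2-4) by (auto simp: st inner_loop_invariant_def outer_loop_invariant_def)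
  then have inner: "inner_loop_invariant n i (\<lambda>k. Cu k - R k) (R i) (r', U', R', ex)"
    unfolding F[symmetric] using assms(1,3) by (intro fold_inner_step_invariant) (auto simp: st)
  have other_rows: "r' k = r k" if "k \<noteq> i" for k
    using outer_step_frame[OF that, of n R r U] by (simp add: step)
  show ?thesis
    unfolding st step outer_loop_invariant_def prod.case
  proof (intro ballI conjI)
    fix k assume k: "k \<in> {1..n}"
    show "0 \<le> U' k" "(real n - 2) * (\<Sum>i=1..n. r' i k) + U' k = Cu k - R k"
      using inner k by (auto simp: inner_loop_invariant_def)
    show "(\<Sum>j=1..n. r' k j) \<le> R k"
      using inner assms(4) k other_rows
      by (cases "k = i") (auto simp: inner_loop_invariant_def outer_loop_invariant_def st)
  qed
qed

lemma fold_outer_step_invariant: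
  assumes "distinct is" "set is \<subseteq> {1..n}" "\<forall>i\<in>{1..n}. 0 \<le> R i"
    and "\<forall>i\<in>set is. \<forall>j. fst st i j = 0" "outer_loop_invariant n Cu R st"
  shows "outer_loop_invariant n Cu R (fold (outer_step n R) is st)"
  using assms
proof (induction "is" arbitrary: st)
  case (Cons i "is")
  obtain r U where st: "st = (r, U)" by (cases st)
  have "\<forall>i'\<in>set is. \<forall>j. fst (outer_step n R i st) i' j = 0"
  proof (intro ballI allI)
    fix i' j assume "i' \<in> set is"
    then have "i' \<noteq> i" and "r i' j = 0"
      using Cons.prems(1,4) by (auto simp: st)
    then show "fst (outer_step n R i st) i' j = 0"
      by (simp add: st outer_step_frame)
  qed
  moreover have "outer_loop_invariant n Cu R (outer_step n R i st)"
    using Cons.prems by (intro outer_step_invariant) auto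
  ultimately show ?case
    using Cons by simp
qed simp

lemma substream_rates_invariant:
  assumes "\<forall>i\<in>{1..n}. 0 \<le> R i \<and> R i \<le> Cu i"
  obtains U where "outer_loop_invariant n Cu R (substream_rates n Cu R, U)"
proof -
  have "outer_loop_invariant n Cu R (\<lambda>_ _. 0, \<lambda>j. Cu j - R j)"
    using assms by (auto simp: outer_loop_invariant_def)
  then have "outer_loop_invariant n Cu R
      (fold (outer_step n R) [1..<n+1] (\<lambda>_ _. 0, \<lambda>j. Cu j - R j))"
    using assms by (intro fold_outer_step_invariant) auto
  moreover obtain r U where "fold (outer_step n R) [1..<n+1] (\<lambda>_ _. 0, \<lambda>j. Cu j - R j) = (r, U)"
    by fastforce
  ultimately show ?thesis
    using that by (simp add: substream_rates_def)
qed

theorem propositionB5: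
  fixes n :: nat and Cu Cd R :: "nat \<Rightarrow> real"
  assumes "n \<ge> 1"
    and "\<forall>i\<in>{1..n}. Cu i > 0"
    and "\<forall>i\<in>{1..n}. Cd i > 0"
    and "\<forall>i\<in>{1..n}. R i > 0"
    and "\<forall>i\<in>{1..n}. R i \<le> Cu i"
    and "\<forall>i\<in>{1..n}. (\<Sum>j\<in>{1..n} - {i}. R j) \<le> Cd i"
    and "(real n - 1) * (\<Sum>i=1..n. R i) \<le> (\<Sum>i=1..n. Cu i)"
  shows "\<forall>k\<in>{1..n}.
           (\<Sum>j=1..n. substream_rates n Cu R k j)
           + (real n - 2) * (\<Sum>i=1..n. substream_rates n Cu R i k) \<le> Cu k"
proof -
  have "\<forall>i\<in>{1..n}. 0 \<le> R i \<and> R i \<le> Cu i"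
    using assms(4,5) by (auto simp: less_imp_le)
  then obtain U where inv: "outer_loop_invariant n Cu R (substream_rates n Cu R, U)"
    by (rule substream_rates_invariant)
  show ?thesis
  proof
    fix k assume "k \<in> {1..n}"
    with inv have "0 \<le> U k"
      and "(real n - 2) * (\<Sum>i=1..n. substream_rates n Cu R i k) + U k = Cu k - R k"
      and "(\<Sum>j=1..n. substream_rates n Cu R k j) \<le> R k"
      by (auto simp: outer_loop_invariant_def)
    then show "(\<Sum>j=1..n. substream_rates n Cu R k j)
        + (real n - 2) * (\<Sum>i=1..n. substream_rates n Cu R i k) \<le> Cu k"
      by linarith
  qed
qed

end
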